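(* Let $-1\le\alpha\le1$ and $C=1-\log 2$. For every $N\ge1$ and every set $\omega\subset\mathbb{R}\times(-\pi,\pi]$ with $|\omega|=N$, $$\sum_{\substack{z,z'\in\omega\\ z\ne z'}}W_\alpha(z-z')\ \ge\ -N(\log N+C).$$
   Context: For $-1\le\alpha\le1$ and $(x,y)\in\mathbb{R}^2$ with $\cosh x-\cos y>0$, define $$W_\alpha(x,y)=\frac12\left[\frac{\alpha\,x\sinh x}{\cosh x-\cos y}-\log\big(2(\cosh x-\cos y)\big)+(1-\alpha)|x|\right].$$ For distinct $z,z'\in\mathbb{R}\times(-\pi,\pi]$ the difference $z-z'$ lies in the domain of $W_\alpha$. *)

theory Defs
  imports "HOL-Analysis.Analysis"
begin

definition W :: "real \<Rightarrow> real \<Rightarrow> real \<Rightarrow> real" where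
  "W \<alpha> x y = (1/2) * (\<alpha> * x * sinh x / (cosh x - cos y)
      - ln (2 * (cosh x - cos y)) + (1 - \<alpha>) * \<bar>x\<bar>)"

end

theory Submission
  imports Defs
begin

text \<open>
  Moving the hyperbolic functions in \<open>W \<alpha>\<close> from \<open>\<bar>x\<bar>\<close> to \<open>\<bar>x\<bar> + e\<close> gives a kernel
  \<open>W_smooth \<alpha> e\<close> with the Fourier expansion
  \<open>W_smooth \<alpha> e x y = (\<Sum>k. exp (- k e) / k * (1 + \<alpha> k \<bar>x\<bar>) exp (- k \<bar>x\<bar>) cos (k y))\<close>.
  Since \<open>t \<mapsto> (1 + b \<bar>t\<bar>) exp (- \<bar>t\<bar>)\<close> is a positive definite function for \<open>\<bar>b\<bar> \<le> 1\<close>, every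
  term is a positive semidefinite kernel in \<open>(x, y)\<close>, so the double sum of \<open>W_smooth \<alpha> e\<close> over
  \<open>\<omega> \<times> \<omega>\<close>, diagonal included, is nonnegative. Moreover \<open>W_smooth \<alpha> e - e / 2\<close> does not
  increase in \<open>e\<close>, so off the diagonal \<open>W \<alpha> \<ge> W_smooth \<alpha> e - e / 2\<close>, while each of the \<open>N\<close>
  diagonal terms is at most \<open>e / 2 - ln e\<close>. The choice \<open>e = 2 / N\<close> balances the two errors.
\<close>

lemma sinh_ge_self: "0 \<le> (t::real) \<Longrightarrow> t \<le> sinh t"
  using real_le_x_sinh[of t] by (simp add: sinh_def exp_minus)

lemma cosh_ge_1_plus_half_power2: "1 + x\<^sup>2 / 2 \<le> cosh (x::real)"
proof -
  have "\<bar>x / 2\<bar> \<le> sinh \<bar>x / 2\<bar>"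
    by (rule sinh_ge_self) simp
  then have "\<bar>x / 2\<bar> \<le> \<bar>sinh (x / 2)\<bar>"
    by (simp only: sinh_real_abs)
  then have "(x / 2)\<^sup>2 \<le> (sinh (x / 2))\<^sup>2"
    by (metis abs_le_square_iff)
  moreover have "cosh x = 1 + 2 * (sinh (x / 2))\<^sup>2"
    using cosh_double[of "x / 2"] cosh_square_eq[of "x / 2"] by simp
  ultimately show ?thesis by (simp add: power_divide)
qed

lemma quadratic_form_nonneg:
  fixes p q r x y :: real
  assumes "0 < r" "q\<^sup>2 \<le> p * r"
  shows "0 \<le> p * x\<^sup>2 + 2 * q * x * y + r * y\<^sup>2"
proof -
  have "r * (p * x\<^sup>2 + 2 * q * x * y + r * y\<^sup>2) = (r * y + q * x)\<^sup>2 + (p * r - q\<^sup>2) * x\<^sup>2"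
    by (simp add: power2_eq_square algebra_simps)
  also have "\<dots> \<ge> 0" using assms(2) by simp
  finally show ?thesis using assms(1) by (simp add: zero_le_mult_iff)
qed

lemma cmod_1_minus_rcis_squared: "(cmod (1 - rcis s y))\<^sup>2 = 1 - 2 * s * cos y + s\<^sup>2"
proof -
  have "(cmod (1 - rcis s y))\<^sup>2 = (1 - s * cos y)\<^sup>2 + (s * sin y)\<^sup>2"
    by (simp add: cmod_power2)
  also have "\<dots> = 1 - 2 * s * cos y + s\<^sup>2 * ((sin y)\<^sup>2 + (cos y)\<^sup>2)"
    by algebra
  finally show ?thesis by simp
qed

lemma sums_power_mult_cos_div:
  fixes s y :: real
  assumes "\<bar>s\<bar> < 1"
  shows "(\<lambda>k. s ^ k * cos (k * y) / k) sums (- ln (1 - 2 * s * cos y + s\<^sup>2) / 2)"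
proof -
  define q where "q = rcis s y"
  have q: "cmod q < 1" using assms by (simp add: q_def)
  then have "(\<lambda>k. - (q ^ k) / of_nat k) sums Ln (1 - q)"
    using Ln_series'[of "-q"] by simp
  then have "(\<lambda>k. Re (- (q ^ k) / of_nat k)) sums Re (Ln (1 - q))"
    by (simp add: sums_complex_iff)
  moreover have "1 - q \<noteq> 0" using q by auto
  ultimately have "(\<lambda>k. - (s ^ k * cos (k * y)) / k) sums ln (cmod (1 - q))"
    by (simp add: q_def DeMoivre2)
  then have "(\<lambda>k. s ^ k * cos (k * y) / k) sums (- ln (cmod (1 - q)))"
    using sums_minus by fastforce
  moreover have "ln (cmod (1 - q)) = ln ((cmod (1 - q))\<^sup>2) / 2"
    using \<open>1 - q \<noteq> 0\<close> by (simp add: ln_realpow)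
  then have "- ln (cmod (1 - q)) = - ln (1 - 2 * s * cos y + s\<^sup>2) / 2"
    by (simp add: q_def cmod_1_minus_rcis_squared)
  ultimately show ?thesis by simp
qed

lemma sums_power_mult_cos:
  fixes s y :: real
  assumes "\<bar>s\<bar> < 1"
  shows "(\<lambda>k. s ^ k * cos (k * y)) sums ((1 - s * cos y) / (1 - 2 * s * cos y + s\<^sup>2))"
proof -
  define q where "q = rcis s y"
  have "cmod q < 1" using assms by (simp add: q_def)
  then have "(\<lambda>k. q ^ k) sums (1 / (1 - q))"
    by (rule geometric_sums)
  then have "(\<lambda>k. Re (q ^ k)) sums Re (1 / (1 - q))"
    by (simp add: sums_complex_iff)
  moreover have "Re (1 / (1 - q)) = (1 - s * cos y) / (1 - 2 * s * cos y + s\<^sup>2)"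
    by (simp add: Re_divide' q_def flip: cmod_1_minus_rcis_squared)
  ultimately show ?thesis by (simp add: q_def DeMoivre2)
qed

definition lin_exp_kernel :: "real \<Rightarrow> real \<Rightarrow> real" where
  "lin_exp_kernel b t = (1 + b * \<bar>t\<bar>) * exp (- \<bar>t\<bar>)"

definition exp_moment :: "('i \<Rightarrow> real) \<Rightarrow> ('i \<Rightarrow> real) \<Rightarrow> 'i set \<Rightarrow> real \<Rightarrow> real" where
  "exp_moment a x I t = (\<Sum>i\<in>I. a i * exp (x i - t))"

definition lin_exp_moment :: "('i \<Rightarrow> real) \<Rightarrow> ('i \<Rightarrow> real) \<Rightarrow> 'i set \<Rightarrow> real \<Rightarrow> real" where
  "lin_exp_moment a x I t = (\<Sum>i\<in>I. a i * (t - x i) * exp (x i - t))"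

text \<open>
  Positive definiteness of \<open>lin_exp_kernel b\<close> is proved by sweeping the points \<open>x i\<close> from
  left to right. For \<open>t \<ge> x i\<close>, the field \<open>\<Sum>i. a i * lin_exp_kernel b (t - x i)\<close> equals
  \<open>S + b * T\<close> with \<open>S = exp_moment a x I t\<close> and \<open>T = lin_exp_moment a x I t\<close>, and
  \<open>kernel_energy b S T\<close> is a Lyapunov function: it is nonnegative, it does not increase as \<open>t\<close>
  grows, and adding a point at \<open>t\<close> raises it exactly as much as the quadratic form.
\<close>

definition kernel_energy :: "real \<Rightarrow> real \<Rightarrow> real \<Rightarrow> real" where
  "kernel_energy b S T = S\<^sup>2 + 2 * b * S * T + 2 * T\<^sup>2"

lemma kernel_energy_nonneg:
  assumes "\<bar>b\<bar> \<le> 1"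
  shows "0 \<le> kernel_energy b S T"
proof -
  have "b\<^sup>2 \<le> 1" using assms by (simp add: abs_square_le_1)
  then have "0 \<le> (S + b * T)\<^sup>2 + (2 - b\<^sup>2) * T\<^sup>2" by simp
  also have "\<dots> = kernel_energy b S T"
    by (simp add: kernel_energy_def power2_eq_square algebra_simps)
  finally show ?thesis .
qed

lemma kernel_energy_decay:
  assumes "0 \<le> d" "\<bar>b\<bar> \<le> 1"
  shows "kernel_energy b (exp (- d) * S) (exp (- d) * (T + d * S)) \<le> kernel_energy b S T"
proof (cases "d = 0")
  case False
  define e where "e = exp (- d)"
  have "0 < e" "e < 1" using assms False by (auto simp: e_def)
  have "2 * d * e \<le> (exp d - exp (- d)) * e"
    using sinh_ge_self[OF assms(1)] \<open>0 < e\<close> by (simp add: sinh_def)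
  also have "\<dots> = 1 - e\<^sup>2"
    by (simp add: e_def power2_eq_square algebra_simps flip: exp_add)
  finally have "(2 * d * e)\<^sup>2 \<le> (1 - e\<^sup>2)\<^sup>2"
    using assms(1) \<open>0 < e\<close> by (intro power_mono) auto
  moreover have "b\<^sup>2 \<le> 1" using assms(2) by (simp add: abs_square_le_1)
  then have "(1 - e\<^sup>2)\<^sup>2 \<le> (2 - b\<^sup>2) * (1 - e\<^sup>2)\<^sup>2"
    using mult_right_mono[of 1 "2 - b\<^sup>2" "(1 - e\<^sup>2)\<^sup>2"] by simp
  \<comment> \<open>discriminant of the quadratic form in \<open>(S, T)\<close> that is the decrease of the energy\<close>
  ultimately have "(b - e\<^sup>2 * (b + 2 * d))\<^sup>2
      \<le> (1 - e\<^sup>2 * (1 + 2 * b * d + 2 * d\<^sup>2)) * (2 * (1 - e\<^sup>2))"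
    by (simp add: power2_eq_square algebra_simps)
  moreover have "0 < 2 * (1 - e\<^sup>2)"
    using \<open>0 < e\<close> \<open>e < 1\<close> by (simp add: power2_less_1_iff)
  ultimately have "0 \<le> (1 - e\<^sup>2 * (1 + 2 * b * d + 2 * d\<^sup>2)) * S\<^sup>2
      + 2 * (b - e\<^sup>2 * (b + 2 * d)) * S * T + 2 * (1 - e\<^sup>2) * T\<^sup>2"
    by (intro quadratic_form_nonneg) auto
  then show ?thesis
    by (simp add: kernel_energy_def e_def[symmetric] power2_eq_square algebra_simps)
qed simp

lemma exp_moment_shift: "exp_moment a x I t = exp (s - t) * exp_moment a x I s"
  unfolding exp_moment_def sum_distrib_left
  by (rule sum.cong) (auto simp flip: exp_add)

lemma lin_exp_moment_shift:
  "lin_exp_moment a x I t = exp (s - t) * (lin_exp_moment a x I s + (t - s) * exp_moment a x I s)"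
  unfolding exp_moment_def lin_exp_moment_def sum_distrib_left distrib_left sum.distrib[symmetric]
  by (rule sum.cong) (auto simp: algebra_simps simp flip: exp_add)

lemma kernel_energy_moments_antimono:
  assumes "s \<le> t" "\<bar>b\<bar> \<le> 1"
  shows "kernel_energy b (exp_moment a x I t) (lin_exp_moment a x I t)
    \<le> kernel_energy b (exp_moment a x I s) (lin_exp_moment a x I s)"
  using kernel_energy_decay[of "t - s" b] assms
  by (simp add: exp_moment_shift[of _ _ _ t s] lin_exp_moment_shift[of _ _ _ t s])

lemma kernel_energy_moments_le_quadratic_form:
  fixes a x :: "'i \<Rightarrow> real"
  assumes "finite I" "\<bar>b\<bar> \<le> 1" "\<forall>i\<in>I. x i \<le> t"
  shows "kernel_energy b (exp_moment a x I t) (lin_exp_moment a x I t)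
    \<le> (\<Sum>i\<in>I. \<Sum>j\<in>I. a i * a j * lin_exp_kernel b (x i - x j))"
  using assms(1,3)
proof (induction I arbitrary: t rule: finite_ranking_induct[where f = x])
  case empty
  then show ?case by (simp add: exp_moment_def lin_exp_moment_def kernel_energy_def)
next
  case (insert k I)
  show ?case
  proof (cases "k \<in> I")
    case True
    then show ?thesis using insert by (simp add: insert_absorb)
  next
    case False
    define S where "S = exp_moment a x I (x k)"
    define T where "T = lin_exp_moment a x I (x k)"
    define Q where "Q = (\<Sum>i\<in>I. \<Sum>j\<in>I. a i * a j * lin_exp_kernel b (x i - x j))"
    have row: "(\<Sum>j\<in>I. a j * lin_exp_kernel b (x k - x j)) = S + b * T"
      unfolding S_def T_def exp_moment_def lin_exp_moment_def sum_distrib_left sum.distrib[symmetric]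
      using insert.hyps(2) by (intro sum.cong) (auto simp: lin_exp_kernel_def algebra_simps)
    have col: "(\<Sum>i\<in>I. a i * lin_exp_kernel b (x i - x k)) = S + b * T"
      using row by (simp add: lin_exp_kernel_def abs_minus_commute)
    have "kernel_energy b (exp_moment a x (insert k I) t) (lin_exp_moment a x (insert k I) t)
        \<le> kernel_energy b (exp_moment a x (insert k I) (x k)) (lin_exp_moment a x (insert k I) (x k))"
      using insert.prems assms(2) by (intro kernel_energy_moments_antimono) auto
    also have "\<dots> = kernel_energy b (a k + S) T"
      using False insert.hyps(1) by (simp add: S_def T_def exp_moment_def lin_exp_moment_def)
    also have "\<dots> = a k * a k + a k * (\<Sum>j\<in>I. a j * lin_exp_kernel b (x k - x j))
          + a k * (\<Sum>i\<in>I. a i * lin_exp_kernel b (x i - x k)) + kernel_energy b S T"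
      unfolding row col by (simp add: kernel_energy_def power2_eq_square algebra_simps)
    also have "\<dots> \<le> a k * a k + a k * (\<Sum>j\<in>I. a j * lin_exp_kernel b (x k - x j))
          + a k * (\<Sum>i\<in>I. a i * lin_exp_kernel b (x i - x k)) + Q"
      using insert.IH[of "x k"] insert.hyps(2) by (simp add: S_def T_def Q_def)
    also have "\<dots> = (\<Sum>i\<in>insert k I. \<Sum>j\<in>insert k I. a i * a j * lin_exp_kernel b (x i - x j))"
      using False insert.hyps(1)
      by (simp add: Q_def sum.distrib sum_distrib_left lin_exp_kernel_def algebra_simps)
    finally show ?thesis .
  qed
qed

theorem lin_exp_kernel_psd:
  fixes a x :: "'i \<Rightarrow> real"
  assumes "finite I" "\<bar>b\<bar> \<le> 1"
  shows "0 \<le> (\<Sum>i\<in>I. \<Sum>j\<in>I. a i * a j * lin_exp_kernel b (x i - x j))"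
proof (cases "I = {}")
  case False
  then have "\<forall>i\<in>I. x i \<le> Max (x ` I)" using assms(1) by simp
  then show ?thesis
    using kernel_energy_moments_le_quadratic_form[OF assms] kernel_energy_nonneg[OF assms(2)]
    by (meson order_trans)
qed simp

corollary lin_exp_kernel_cos_psd:
  fixes x y :: "'i \<Rightarrow> real"
  assumes "finite I" "\<bar>b\<bar> \<le> 1"
  shows "0 \<le> (\<Sum>i\<in>I. \<Sum>j\<in>I. lin_exp_kernel b (x i - x j) * cos (y i - y j))"
proof -
  have "(\<Sum>i\<in>I. \<Sum>j\<in>I. lin_exp_kernel b (x i - x j) * cos (y i - y j))
      = (\<Sum>i\<in>I. \<Sum>j\<in>I. cos (y i) * cos (y j) * lin_exp_kernel b (x i - x j))
        + (\<Sum>i\<in>I. \<Sum>j\<in>I. sin (y i) * sin (y j) * lin_exp_kernel b (x i - x j))"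
    by (simp add: cos_diff sum.distrib[symmetric] algebra_simps)
  then show ?thesis
    using lin_exp_kernel_psd[OF assms, of "\<lambda>i. cos (y i)" x]
      lin_exp_kernel_psd[OF assms, of "\<lambda>i. sin (y i)" x]
    by linarith
qed

definition W_smooth :: "real \<Rightarrow> real \<Rightarrow> real \<Rightarrow> real \<Rightarrow> real" where
  "W_smooth \<alpha> e x y = (1/2) * (\<alpha> * \<bar>x\<bar> * sinh (\<bar>x\<bar> + e) / (cosh (\<bar>x\<bar> + e) - cos y)
      - ln (2 * (cosh (\<bar>x\<bar> + e) - cos y)) + (1 - \<alpha>) * \<bar>x\<bar> + e)"

lemma W_smooth_0_eq_W: "W_smooth \<alpha> 0 x y = W \<alpha> x y"
proof -
  have "x * sinh x = \<bar>x\<bar> * sinh \<bar>x\<bar>" by (cases "x \<ge> 0") auto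
  then show ?thesis unfolding W_def W_smooth_def by simp
qed

lemma W_smooth_sums:
  assumes "0 < e"
  shows "(\<lambda>k. exp (- real k * e) / real k * lin_exp_kernel \<alpha> (real k * x) * cos (real k * y))
    sums W_smooth \<alpha> e x y"
proof -
  define u where "u = \<bar>x\<bar> + e"
  define s where "s = exp (- u)"
  define c where "c = cos y"
  define D where "D = cosh u - c"
  have "0 < u" using assms by (simp add: u_def)
  then have "0 < s" "s < 1" by (auto simp: s_def)
  have "1 < cosh u"
    using \<open>0 < u\<close> cosh_real_nonneg_less_iff[of 0 u] by simp
  then have "0 < D"
    using cos_le_one[of y] unfolding D_def c_def by linarith
  have A: "1 - 2 * s * c + s\<^sup>2 = 2 * s * D"
    using exp_minus_inverse[of u] by (simp add: s_def D_def cosh_def power2_eq_square algebra_simps)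
  \<comment> \<open>the \<open>k = 0\<close> term of the series is \<open>0\<close> (division by zero), hence the correction\<close>
  have series: "(\<lambda>k. s ^ k * cos (k * y) / k + \<alpha> * \<bar>x\<bar> * (s ^ k * cos (k * y))
        - (if k = 0 then \<alpha> * \<bar>x\<bar> else 0))
      sums (- ln (1 - 2 * s * c + s\<^sup>2) / 2 + \<alpha> * \<bar>x\<bar> * ((1 - s * c) / (1 - 2 * s * c + s\<^sup>2))
        - \<alpha> * \<bar>x\<bar>)"
    using \<open>0 < s\<close> \<open>s < 1\<close> unfolding c_def
    by (intro sums_diff sums_add sums_mult sums_power_mult_cos_div sums_power_mult_cos sums_single) auto
  have "exp (- real k * e) / real k * lin_exp_kernel \<alpha> (real k * x) * cos (real k * y)
      = s ^ k * cos (k * y) / k + \<alpha> * \<bar>x\<bar> * (s ^ k * cos (k * y)) - (if k = 0 then \<alpha> * \<bar>x\<bar> else 0)"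
    for k :: nat
  proof (cases "k = 0")
    case False
    have "s ^ k = exp (- real k * e) * exp (- \<bar>k * x\<bar>)"
      by (simp add: s_def u_def abs_mult algebra_simps flip: exp_of_nat_mult exp_add)
    then show ?thesis using False by (simp add: lin_exp_kernel_def abs_mult field_simps)
  qed simp
  moreover have "- ln (1 - 2 * s * c + s\<^sup>2) / 2 + \<alpha> * \<bar>x\<bar> * ((1 - s * c) / (1 - 2 * s * c + s\<^sup>2))
        - \<alpha> * \<bar>x\<bar> = W_smooth \<alpha> e x y"
  proof -
    have "- ln (1 - 2 * s * c + s\<^sup>2) / 2 = (u - ln (2 * D)) / 2"
      unfolding A using \<open>0 < s\<close> \<open>0 < D\<close> by (simp add: ln_mult s_def)
    moreover have "(1 - s * c) / (1 - 2 * s * c + s\<^sup>2) = 1 + (sinh u - D) / (2 * D)"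
    proof -
      have "1 - s * c = 2 * s * D + s * (sinh u - D)"
        using A cosh_minus_sinh[of u] by (simp add: s_def D_def power2_eq_square algebra_simps)
      then have "(1 - s * c) / (2 * s * D) = (2 * s * D + s * (sinh u - D)) / (2 * s * D)"
        by simp
      also have "\<dots> = 1 + (sinh u - D) / (2 * D)"
        using \<open>0 < s\<close> \<open>0 < D\<close> by (simp add: field_simps)
      finally show ?thesis unfolding A .
    qed
    moreover have "(u - ln (2 * D)) / 2 + \<alpha> * \<bar>x\<bar> * (1 + (sinh u - D) / (2 * D)) - \<alpha> * \<bar>x\<bar>
        = (1/2) * (\<alpha> * \<bar>x\<bar> * sinh u / D - ln (2 * D) + (1 - \<alpha>) * \<bar>x\<bar> + e)"
      using \<open>0 < D\<close> by (simp add: u_def field_simps)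
    ultimately show ?thesis
      by (simp add: W_smooth_def u_def D_def c_def)
  qed
  ultimately show ?thesis
    using series by (simp only:)
qed

lemma mult_one_minus_mult_cosh_le:
  fixes a u c :: real
  assumes "\<bar>a\<bar> \<le> u" "\<bar>c\<bar> \<le> 1"
  shows "a * (1 - c * cosh u) \<le> sinh u * (cosh u - c)"
proof -
  have "0 \<le> u" using assms(1) by linarith
  have "a * (1 - c * cosh u) \<le> \<bar>a\<bar> * \<bar>1 - c * cosh u\<bar>"
    using abs_ge_self[of "a * (1 - c * cosh u)"] by (simp add: abs_mult)
  also have "\<dots> \<le> u * \<bar>1 - c * cosh u\<bar>"
    using assms(1) by (rule mult_right_mono) simp
  also have "\<dots> \<le> sinh u * (cosh u - c)"
  proof -
    have "u \<le> sinh u" "1 \<le> cosh u" and c: "0 \<le> 1 - c" "0 \<le> 1 + c"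
      using sinh_ge_self[OF \<open>0 \<le> u\<close>] cosh_real_ge_1[of u] assms(2) by auto
    then have p: "0 \<le> (sinh u - u) * (cosh u + 1)" "0 \<le> (sinh u + u) * (cosh u - 1)"
      "0 \<le> (sinh u - u) * (cosh u - 1)" "0 \<le> (sinh u + u) * (cosh u + 1)"
      using \<open>0 \<le> u\<close> by simp_all
    \<comment> \<open>for either sign of \<open>1 - c * cosh u\<close>, twice the gap is one of these two sums\<close>
    have "0 \<le> (1 - c) * ((sinh u - u) * (cosh u + 1)) + (1 + c) * ((sinh u + u) * (cosh u - 1))"
      using mult_nonneg_nonneg[OF c(1) p(1)] mult_nonneg_nonneg[OF c(2) p(2)] by linarith
    moreover have "0 \<le> (1 + c) * ((sinh u - u) * (cosh u - 1)) + (1 - c) * ((sinh u + u) * (cosh u + 1))"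
      using mult_nonneg_nonneg[OF c(2) p(3)] mult_nonneg_nonneg[OF c(1) p(4)] by linarith
    ultimately show ?thesis
      by (cases "0 \<le> 1 - c * cosh u") (simp_all add: algebra_simps)
  qed
  finally show ?thesis .
qed

lemma W_smooth_has_real_derivative:
  assumes "0 < cosh (\<bar>x\<bar> + e) - cos y"
  shows "((\<lambda>e. W_smooth \<alpha> e x y) has_real_derivative
      (1/2) * (\<alpha> * \<bar>x\<bar> * (1 - cos y * cosh (\<bar>x\<bar> + e)) / (cosh (\<bar>x\<bar> + e) - cos y)\<^sup>2
        - sinh (\<bar>x\<bar> + e) / (cosh (\<bar>x\<bar> + e) - cos y) + 1)) (at e)"
proof -
  define u where "u = \<bar>x\<bar> + e"
  have "cosh u * (cosh u - cos y) - sinh u * sinh u = 1 - cos y * cosh u"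
    using hyperbolic_pythagoras[of u] by (simp add: power2_eq_square algebra_simps)
  then show ?thesis
    using assms unfolding W_smooth_def u_def[symmetric]
    by (auto intro!: derivative_eq_intros simp: u_def power2_eq_square field_simps)
qed

lemma W_smooth_minus_half_le_W:
  assumes "\<bar>\<alpha>\<bar> \<le> 1" "0 < cosh x - cos y" "0 \<le> e"
  shows "W_smooth \<alpha> e x y - e / 2 \<le> W \<alpha> x y"
proof -
  have "W_smooth \<alpha> e x y - e / 2 \<le> W_smooth \<alpha> 0 x y - 0 / 2"
  proof (rule DERIV_nonpos_imp_nonincreasing[OF assms(3)])
    fix t :: real
    assume "0 \<le> t"
    define u where "u = \<bar>x\<bar> + t"
    define D where "D = cosh u - cos y"
    define A where "A = \<alpha> * \<bar>x\<bar> * (1 - cos y * cosh u) / D\<^sup>2"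
    have "cosh x \<le> cosh u"
      using \<open>0 \<le> t\<close> cosh_real_nonneg_le_iff[of "\<bar>x\<bar>" u] by (simp add: u_def)
    then have "0 < D" using assms(2) by (simp add: D_def)
    have "\<bar>\<alpha> * \<bar>x\<bar>\<bar> \<le> u"
      using assms(1) \<open>0 \<le> t\<close> mult_left_le_one_le[of "\<bar>x\<bar>" "\<bar>\<alpha>\<bar>"] by (simp add: u_def abs_mult)
    then have "\<alpha> * \<bar>x\<bar> * (1 - cos y * cosh u) \<le> sinh u * D"
      unfolding D_def by (rule mult_one_minus_mult_cosh_le) simp
    then have "\<alpha> * \<bar>x\<bar> * (1 - cos y * cosh u) / D\<^sup>2 \<le> sinh u * D / D\<^sup>2"
      by (rule divide_right_mono) simp
    also have "\<dots> = sinh u / D"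
      using \<open>0 < D\<close> by (simp add: power2_eq_square)
    finally have "A \<le> sinh u / D"
      unfolding A_def .
    then have "(1/2) * (A - sinh u / D + 1) - 1/2 \<le> 0"
      by (simp add: algebra_simps)
    moreover have "((\<lambda>e. W_smooth \<alpha> e x y) has_real_derivative (1/2) * (A - sinh u / D + 1)) (at t)"
      using W_smooth_has_real_derivative[of x t y \<alpha>] \<open>0 < D\<close> by (simp add: A_def u_def D_def)
    note DERIV_diff[OF this DERIV_cdivide[OF DERIV_ident, of 2]]
    ultimately
    show "\<exists>d. ((\<lambda>e. W_smooth \<alpha> e x y - e / 2) has_real_derivative d) (at t) \<and> d \<le> 0"
      by blast
  qed
  then show ?thesis by (simp add: W_smooth_0_eq_W)
qed

lemma W_smooth_psd:
  fixes x y :: "'i \<Rightarrow> real"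
  assumes "finite I" "0 < e" "\<bar>\<alpha>\<bar> \<le> 1"
  shows "0 \<le> (\<Sum>i\<in>I. \<Sum>j\<in>I. W_smooth \<alpha> e (x i - x j) (y i - y j))"
proof (rule sums_le[OF _ sums_zero sums_sum[OF sums_sum]])
  fix k :: nat
  have "0 \<le> exp (- real k * e) / real k
      * (\<Sum>i\<in>I. \<Sum>j\<in>I. lin_exp_kernel \<alpha> (k * x i - k * x j) * cos (k * y i - k * y j))"
    using lin_exp_kernel_cos_psd[OF assms(1,3)] by simp
  then show "0 \<le> (\<Sum>i\<in>I. \<Sum>j\<in>I. exp (- real k * e) / real k
      * lin_exp_kernel \<alpha> (real k * (x i - x j)) * cos (real k * (y i - y j)))"
    by (simp add: sum_distrib_left right_diff_distrib mult.assoc)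
qed (rule W_smooth_sums[OF assms(2)])

lemma cosh_minus_cos_pos:
  fixes x y :: real
  assumes "\<bar>y\<bar> < 2 * pi" "x \<noteq> 0 \<or> y \<noteq> 0"
  shows "0 < cosh x - cos y"
proof (cases "x = 0")
  case False
  then have "1 < cosh x"
    using cosh_real_nonneg_less_iff[of 0 "\<bar>x\<bar>"] by simp
  then show ?thesis using cos_le_one[of y] by linarith
next
  case True
  have "cos y \<noteq> 1"
  proof
    assume "cos y = 1"
    then obtain n :: int where "y = n * 2 * pi" by (auto simp: cos_one_2pi_int)
    with assms True show False by (auto simp: abs_mult)
  qed
  with cos_le_one[of y] have "cos y < 1" by (simp add: order_less_le)
  then show ?thesis using True by simp
qed

lemma sum_off_diagonal:
  fixes f :: "'a \<Rightarrow> 'a \<Rightarrow> 'b::ab_group_add"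
  assumes "finite A"
  shows "(\<Sum>(z, z') \<in> {(z, z'). z \<in> A \<and> z' \<in> A \<and> z \<noteq> z'}. f z z')
    = (\<Sum>z\<in>A. \<Sum>z'\<in>A. f z z') - (\<Sum>z\<in>A. f z z)"
proof -
  let ?D = "(\<lambda>z. (z, z)) ` A"
  have off_diagonal: "{(z, z'). z \<in> A \<and> z' \<in> A \<and> z \<noteq> z'} = A \<times> A - ?D"
    by auto
  have "(\<Sum>(z, z') \<in> {(z, z'). z \<in> A \<and> z' \<in> A \<and> z \<noteq> z'}. f z z')
      = (\<Sum>(z, z') \<in> A \<times> A. f z z') - (\<Sum>(z, z') \<in> ?D. f z z')"
    unfolding off_diagonal by (rule sum_diff) (use assms in auto)
  also have "(\<Sum>(z, z') \<in> ?D. f z z') = (\<Sum>z\<in>A. f z z)"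
    by (subst sum.reindex) (auto simp: inj_on_def)
  finally show ?thesis
    by (simp add: sum.cartesian_product)
qed

lemma sum_W_pairs_ge:
  fixes \<omega> :: "(real \<times> real) set"
  assumes "\<bar>\<alpha>\<bar> \<le> 1" "finite \<omega>" "\<forall>z\<in>\<omega>. -pi < snd z \<and> snd z \<le> pi" "0 < e"
  shows "(\<Sum>(z, z') \<in> {(z, z'). z \<in> \<omega> \<and> z' \<in> \<omega> \<and> z \<noteq> z'}.
            W \<alpha> (fst z - fst z') (snd z - snd z'))
    \<ge> - real (card \<omega>) * W_smooth \<alpha> e 0 0 - (real (card \<omega>) ^ 2 - real (card \<omega>)) * e / 2"
proof -
  define P where "P = {(z, z'). z \<in> \<omega> \<and> z' \<in> \<omega> \<and> z \<noteq> z'}"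
  define V where "V z z' = W_smooth \<alpha> e (fst z - fst z') (snd z - snd z')" for z z' :: "real \<times> real"
  have "V z z' - e / 2 \<le> W \<alpha> (fst z - fst z') (snd z - snd z')" if "(z, z') \<in> P" for z z'
  proof -
    have "-pi < snd z" "snd z \<le> pi" "-pi < snd z'" "snd z' \<le> pi"
      using that assms(3) by (auto simp: P_def)
    then have "\<bar>snd z - snd z'\<bar> < 2 * pi"
      unfolding abs_less_iff by linarith
    then have "0 < cosh (fst z - fst z') - cos (snd z - snd z')"
      using that by (intro cosh_minus_cos_pos) (auto simp: P_def prod_eq_iff)
    then show ?thesis
      unfolding V_def using assms(1,4) by (intro W_smooth_minus_half_le_W) auto
  qed
  then have "(\<Sum>(z, z') \<in> P. V z z' - e / 2)
      \<le> (\<Sum>(z, z') \<in> P. W \<alpha> (fst z - fst z') (snd z - snd z'))"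
    by (intro sum_mono) auto
  moreover have "(\<Sum>(z, z') \<in> P. V z z' - e / 2)
      = (\<Sum>(z, z') \<in> P. V z z') - (\<Sum>(z, z') \<in> P. e / 2)"
    by (simp add: case_prod_unfold sum_subtractf)
  moreover have "(\<Sum>(z, z') \<in> P. V z z')
      = (\<Sum>z\<in>\<omega>. \<Sum>z'\<in>\<omega>. V z z') - real (card \<omega>) * W_smooth \<alpha> e 0 0"
    using sum_off_diagonal[OF assms(2), of V] by (simp add: P_def V_def)
  moreover have "(\<Sum>(z, z') \<in> P. e / 2) = (real (card \<omega>) ^ 2 - real (card \<omega>)) * e / 2"
    unfolding P_def sum_off_diagonal[OF assms(2)] by (simp add: power2_eq_square algebra_simps)
  moreover have "0 \<le> (\<Sum>z\<in>\<omega>. \<Sum>z'\<in>\<omega>. V z z')"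
    unfolding V_def using assms by (intro W_smooth_psd) auto
  ultimately show ?thesis
    unfolding P_def by linarith
qed

theorem proposition2:
  fixes \<alpha> :: real and \<omega> :: "(real \<times> real) set" and N :: nat
  assumes "-1 \<le> \<alpha>" "\<alpha> \<le> 1"
    and "N \<ge> 1"
    and "finite \<omega>" "card \<omega> = N"
    and "\<forall>z\<in>\<omega>. -pi < snd z \<and> snd z \<le> pi"
  shows "(\<Sum>(z, z') \<in> {(z, z'). z \<in> \<omega> \<and> z' \<in> \<omega> \<and> z \<noteq> z'}.
            W \<alpha> (fst z - fst z') (snd z - snd z'))
         \<ge> - real N * (ln (real N) + (1 - ln 2))"
proof -
  define e where "e = 2 / real N"
  have "0 < e" "real N * e = 2"
    using assms(3) by (simp_all add: e_def)
  have "ln (e\<^sup>2) \<le> ln (2 * (cosh e - 1))"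
    using cosh_ge_1_plus_half_power2[of e] \<open>0 < e\<close> by (intro ln_mono) auto
  then have "W_smooth \<alpha> e 0 0 \<le> e / 2 - ln 2 + ln (real N)"
    using \<open>0 < e\<close> assms(3) by (simp add: W_smooth_def ln_realpow e_def ln_div)
  from mult_left_mono[OF this, of "real N"]
  have "real N * W_smooth \<alpha> e 0 0 \<le> 1 - real N * ln 2 + real N * ln (real N)"
    using \<open>real N * e = 2\<close> by (simp add: algebra_simps)
  moreover have "((real N)\<^sup>2 - real N) * e / 2 = (real N * e) * (real N - 1) / 2"
    by (simp add: power2_eq_square algebra_simps)
  then have "((real N)\<^sup>2 - real N) * e / 2 = real N - 1"
    unfolding \<open>real N * e = 2\<close> by simp
  moreover have "- real N * W_smooth \<alpha> e 0 0 - ((real N)\<^sup>2 - real N) * e / 2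
      \<le> (\<Sum>(z, z') \<in> {(z, z'). z \<in> \<omega> \<and> z' \<in> \<omega> \<and> z \<noteq> z'}.
            W \<alpha> (fst z - fst z') (snd z - snd z'))"
    using sum_W_pairs_ge[of \<alpha> \<omega> e] assms \<open>0 < e\<close> by simp
  ultimately show ?thesis
    by (simp add: algebra_simps)
qed

end
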